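(* Let $M$ be the metric space \[M:=\Big\{\Big(a,\tfrac{1}{2^{n}}\Big)\colon a\in[0,1],\ n\in\mathbb{N}\Big\}\cup \Big\{(a,b)\colon a\in\{0,1\},\ b\in\Big[0,\tfrac{1}{2}\Big]\Big\}\subseteq\mathbb{R}^2\] with the metric \[d\big((a,b),(c,e)\big):=\begin{cases} |a-c|, & \text{if }b=e,\\ \min\{a+c,\,2-a-c\}+|b-e|, &\text{if } b\neq e, \end{cases}\] and base point $(0,0)$. Let $x=(0,0)$, $y=(1,0)$, and $\pi_2(a,b)=b$. Let $\varepsilon,\delta>0$ and let $\nu\in\operatorname{conv}\big(\mathrm{Mol}_{\delta,1}(M)\big)$. If there exists $g\in B_{\mathrm{Lip}_0(M)}$ such that $g(\nu)=\|\nu\|$ and $|g(m_{xy})|<\varepsilon$, then there exists $f\in B_{\mathrm{Lip}_0(M)}$ such that \[f(\nu)>\frac{\|\nu\|-\varepsilon-2\delta}{1+\varepsilon+2\delta}\] and $f(p)=0$ for every $p\in M$ with $\pi_2(p)\le\delta$.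
   Context: For a pointed metric space $(M,d,0)$, $\mathrm{Lip}_0(M)$ is the Banach space of Lipschitz functions $f\colon M\to\mathbb{R}$ with $f(0)=0$, normed by the best Lipschitz constant. The Lipschitz-free space $\mathcal{F}(M)$ is the norm-closed linear span of the evaluation functionals $\delta_u$ ($\delta_u(f)=f(u)$), $u\in M$, in $\mathrm{Lip}_0(M)^*$; its dual is $\mathrm{Lip}_0(M)$, and elements of $\mathrm{Lip}_0(M)$ act on $\mathcal{F}(M)$ accordingly. For $u\neq v$ in $M$, the molecule is $m_{uv}=(\delta_u-\delta_v)/d(u,v)\in\mathcal{F}(M)$. For $\delta,\varepsilon>0$, $\mathrm{Mol}_{\delta,\varepsilon}(M)=\{m_{uv}\colon u,v\in M,\ u\neq v,\ \delta<\pi_2(u)<\varepsilon,\ \delta<\pi_2(v)<\varepsilon\}$, and $\operatorname{conv}$ denotes the convex hull. $B_X$ denotes the closed unit ball; $\mathbb{N}=\{1,2,\dots\}$. *)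

theory Defs
  imports "HOL-Analysis.Analysis"
begin

definition pi2 :: "real \<times> real \<Rightarrow> real" where
  "pi2 p = snd p"

definition Msp :: "(real \<times> real) set" where
  "Msp = {(a, 1 / 2 ^ n) | a n. a \<in> {0..1} \<and> n \<ge> (1::nat)}
       \<union> {(a, b) | a b. a \<in> {0, 1} \<and> b \<in> {0..1/2}}"

definition dM :: "real \<times> real \<Rightarrow> real \<times> real \<Rightarrow> real" where
  "dM p q = (if snd p = snd q then \<bar>fst p - fst q\<bar>
             else min (fst p + fst q) (2 - fst p - fst q) + \<bar>snd p - snd q\<bar>)"

text \<open>Closed unit ball of Lip_0(M) with base point (0,0): functions vanishing at the
  base point with Lipschitz constant at most 1 on M (values off M are irrelevant).\<close>

definition Lip0Ball :: "(real \<times> real \<Rightarrow> real) set" where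
  "Lip0Ball = {f. f (0, 0) = 0 \<and> (\<forall>p\<in>Msp. \<forall>q\<in>Msp. \<bar>f p - f q\<bar> \<le> dM p q)}"

text \<open>Molecule m_uv, as a functional acting on Lipschitz functions.\<close>

definition mol :: "real \<times> real \<Rightarrow> real \<times> real \<Rightarrow> (real \<times> real \<Rightarrow> real) \<Rightarrow> real" where
  "mol u v f = (f u - f v) / dM u v"

definition convMol :: "real \<Rightarrow> real \<Rightarrow> ((real \<times> real \<Rightarrow> real) \<Rightarrow> real) set" where
  "convMol \<delta> \<epsilon> = {\<nu>. \<exists>(n::nat) (lam::nat \<Rightarrow> real) u v. n \<ge> 1 \<and>
      (\<forall>i<n. lam i \<ge> 0 \<and> u i \<in> Msp \<and> v i \<in> Msp \<and> u i \<noteq> v i \<and>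
             \<delta> < pi2 (u i) \<and> pi2 (u i) < \<epsilon> \<and> \<delta> < pi2 (v i) \<and> pi2 (v i) < \<epsilon>) \<and>
      (\<Sum>i<n. lam i) = 1 \<and>
      \<nu> = (\<lambda>f. \<Sum>i<n. lam i * mol (u i) (v i) f)}"

definition normF :: "((real \<times> real \<Rightarrow> real) \<Rightarrow> real) \<Rightarrow> real" where
  "normF \<nu> = (SUP f\<in>Lip0Ball. \<nu> f)"

end

theory Submission
  imports Defs
begin

text \<open>Let \<open>g\<close> attain the norm of \<open>\<nu>\<close> and \<open>D = g (1, \<delta>) - g (0, \<delta>)\<close>. Above height
  \<open>\<delta>\<close> replace \<open>g\<close> by \<open>g p - g (0, \<delta>) - D * fst p\<close>, which vanishes at both points
  \<open>(0, \<delta>)\<close>, \<open>(1, \<delta>)\<close>, and below height \<open>\<delta>\<close> by \<open>0\<close>. This function is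
  \<open>(1 + \<bar>D\<bar>)\<close>-Lipschitz, and \<open>\<bar>D\<bar> \<le> 2 \<delta> + \<bar>g (1, 0)\<bar>\<close> because \<open>(0, \<delta>)\<close> and \<open>(1, \<delta>)\<close>
  are \<open>\<delta>\<close>-close to \<open>x\<close> and \<open>y\<close>. Since \<open>fst\<close> is 1-Lipschitz, the linear correction
  lowers the value on each molecule supported above \<open>\<delta>\<close> by at most \<open>\<bar>D\<bar>\<close>; rescaling
  by \<open>1 + 2 \<delta> + \<bar>g (1, 0)\<bar>\<close> gives the required \<open>f\<close>.\<close>

lemma Msp_bounds:
  assumes "p \<in> Msp"
  shows "0 \<le> fst p" "fst p \<le> 1" "0 \<le> snd p" "snd p \<le> 1/2"
proof -
  have "(1::real) / 2 ^ n \<le> 1/2" if "n \<ge> 1" for n :: nat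
  proof -
    have "(2::real) ^ 1 \<le> 2 ^ n" using that by (intro power_increasing) auto
    then show ?thesis by (simp add: divide_simps)
  qed
  then show "0 \<le> fst p" "fst p \<le> 1" "0 \<le> snd p" "snd p \<le> 1/2"
    using assms unfolding Msp_def by auto
qed

lemma vertical_segment_in_Msp:
  assumes "a \<in> {0, 1}" "0 \<le> b" "b \<le> 1/2"
  shows "(a, b) \<in> Msp"
  using assms unfolding Msp_def by auto

lemma dM_commute: "dM p q = dM q p"
  unfolding dM_def by (auto simp: abs_minus_commute)

lemma abs_fst_diff_le_dM:
  assumes "p \<in> Msp" "q \<in> Msp"
  shows "\<bar>fst p - fst q\<bar> \<le> dM p q"
  using Msp_bounds[OF assms(1)] Msp_bounds[OF assms(2)]
  unfolding dM_def by (auto simp: abs_if)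

lemma dM_nonneg:
  assumes "p \<in> Msp" "q \<in> Msp"
  shows "0 \<le> dM p q"
  using abs_fst_diff_le_dM[OF assms] by linarith

lemma dM_pos:
  assumes "p \<in> Msp" "q \<in> Msp" "p \<noteq> q"
  shows "0 < dM p q"
proof (cases "snd p = snd q")
  case True
  then have "fst p \<noteq> fst q" using assms(3) by (metis prod.expand)
  then show ?thesis using True unfolding dM_def by auto
next
  case False
  then show ?thesis using Msp_bounds[OF assms(1)] Msp_bounds[OF assms(2)]
    unfolding dM_def by auto
qed

lemma abs_mol_le_1:
  assumes "f \<in> Lip0Ball" "u \<in> Msp" "v \<in> Msp" "u \<noteq> v"
  shows "\<bar>mol u v f\<bar> \<le> 1"
proof -
  have "\<bar>f u - f v\<bar> \<le> dM u v" using assms unfolding Lip0Ball_def by auto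
  then show ?thesis using dM_pos[OF assms(2-4)] unfolding mol_def
    by (simp add: abs_divide divide_simps)
qed

lemma abs_mol_fst_le_1:
  assumes "u \<in> Msp" "v \<in> Msp" "u \<noteq> v"
  shows "\<bar>mol u v fst\<bar> \<le> 1"
  using dM_pos[OF assms] abs_fst_diff_le_dM[OF assms(1,2)]
  unfolding mol_def by (simp add: abs_divide divide_simps)

lemma mol_scale: "mol u v (\<lambda>p. f p / K) = mol u v f / K"
  unfolding mol_def by (simp add: diff_divide_distrib ac_simps)

lemma convMol_imp_less_half:
  assumes "\<nu> \<in> convMol \<delta> \<epsilon>"
  shows "\<delta> < 1/2"
proof -
  obtain n :: nat and u :: "nat \<Rightarrow> real \<times> real" where "n \<ge> 1" "\<forall>i<n. u i \<in> Msp \<and> \<delta> < pi2 (u i)"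
    using assms unfolding convMol_def by blast
  then show ?thesis using Msp_bounds(4)[of "u 0"] unfolding pi2_def by force
qed

lemma convMol_affine_le:
  assumes "\<nu> \<in> convMol \<delta> \<epsilon>"
    and "\<And>u v. \<lbrakk>u \<in> Msp; v \<in> Msp; u \<noteq> v; \<delta> < pi2 u; pi2 u < \<epsilon>; \<delta> < pi2 v; pi2 v < \<epsilon>\<rbrakk>
           \<Longrightarrow> a * mol u v g + b \<le> mol u v f"
  shows "a * \<nu> g + b \<le> \<nu> f"
proof -
  obtain n :: nat and lam :: "nat \<Rightarrow> real" and u v :: "nat \<Rightarrow> real \<times> real" where
    mols: "\<forall>i<n. lam i \<ge> 0 \<and> u i \<in> Msp \<and> v i \<in> Msp \<and> u i \<noteq> v i \<and>
             \<delta> < pi2 (u i) \<and> pi2 (u i) < \<epsilon> \<and> \<delta> < pi2 (v i) \<and> pi2 (v i) < \<epsilon>" and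
    sum1: "(\<Sum>i<n. lam i) = 1" and
    \<nu>: "\<nu> = (\<lambda>f. \<Sum>i<n. lam i * mol (u i) (v i) f)"
    using assms(1) unfolding convMol_def by blast
  have "(\<Sum>i<n. lam i * (a * mol (u i) (v i) g + b))
      = a * (\<Sum>i<n. lam i * mol (u i) (v i) g) + b * (\<Sum>i<n. lam i)"
    by (simp add: algebra_simps sum.distrib sum_distrib_left)
  then have "a * \<nu> g + b = (\<Sum>i<n. lam i * (a * mol (u i) (v i) g + b))"
    unfolding \<nu> sum1 by simp
  also have "\<dots> \<le> (\<Sum>i<n. lam i * mol (u i) (v i) f)"
    using mols assms(2) by (intro sum_mono mult_left_mono) auto
  finally show ?thesis unfolding \<nu> .
qed

lemma convMol_zero:
  assumes "\<nu> \<in> convMol \<delta> \<epsilon>"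
  shows "\<nu> (\<lambda>_. 0) = 0"
  using assms unfolding convMol_def mol_def by auto

lemma normF_nonneg:
  assumes "\<nu> \<in> convMol \<delta> \<epsilon>"
  shows "0 \<le> normF \<nu>"
proof -
  have "\<nu> h \<le> 1" if h: "h \<in> Lip0Ball" for h
  proof -
    have "1 * \<nu> h + -1 \<le> \<nu> (\<lambda>_. 0)"
    proof (rule convMol_affine_le[OF assms])
      fix u v assume "u \<in> Msp" "v \<in> Msp" "u \<noteq> v"
      then have "mol u v h \<le> 1" using abs_mol_le_1[OF h] by fastforce
      then show "1 * mol u v h + -1 \<le> mol u v (\<lambda>_. 0)" by (simp add: mol_def)
    qed
    then show ?thesis using convMol_zero[OF assms] by simp
  qed
  then have "bdd_above (\<nu> ` Lip0Ball)" by (intro bdd_aboveI2)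
  moreover have "(\<lambda>_. 0) \<in> Lip0Ball" unfolding Lip0Ball_def using dM_nonneg by auto
  ultimately show ?thesis
    unfolding normF_def using cSUP_upper convMol_zero[OF assms] by metis
qed

lemma diff_div_one_plus_strict_antimono:
  fixes N s t :: real
  assumes "-1 < N" "-1 < s" "s < t"
  shows "(N - t) / (1 + t) < (N - s) / (1 + s)"
proof -
  have "(N - t) * (1 + s) < (N - s) * (1 + t)"
    using mult_strict_left_mono[OF assms(3), of "N + 1"] assms(1) by (simp add: algebra_simps)
  then show ?thesis using assms by (simp add: divide_simps)
qed

definition cutoff :: "real \<Rightarrow> (real \<times> real \<Rightarrow> real) \<Rightarrow> real \<times> real \<Rightarrow> real" where
  "cutoff \<delta> g p =
     (if snd p \<le> \<delta> then 0 else g p - g (0, \<delta>) - (g (1, \<delta>) - g (0, \<delta>)) * fst p)"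

lemma cutoff_high_low:
  assumes g: "g \<in> Lip0Ball" and "0 \<le> \<delta>" "\<delta> \<le> 1/2"
    and p: "p \<in> Msp" and q: "q \<in> Msp" and "\<delta> < snd p" "snd q \<le> \<delta>"
  shows "\<bar>cutoff \<delta> g p\<bar> \<le> (1 + \<bar>g (1, \<delta>) - g (0, \<delta>)\<bar>) * dM p q"
proof -
  define D where "D = g (1, \<delta>) - g (0, \<delta>)"
  obtain a b where ab: "p = (a, b)" by fastforce
  have a: "0 \<le> a" "a \<le> 1" using Msp_bounds[OF p] ab by auto
  have z: "(0, \<delta>) \<in> Msp" "(1, \<delta>) \<in> Msp"
    using assms(2,3) by (auto intro: vertical_segment_in_Msp)
  have "\<bar>g p - g (0, \<delta>)\<bar> \<le> dM p (0, \<delta>)" "\<bar>g p - g (1, \<delta>)\<bar> \<le> dM p (1, \<delta>)"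
    using g p z unfolding Lip0Ball_def by auto
  moreover have "dM p (0, \<delta>) = a + b - \<delta>" "dM p (1, \<delta>) = 1 - a + b - \<delta>"
    using a assms(6) unfolding ab dM_def by auto
  moreover have "cutoff \<delta> g p = (g p - g (0, \<delta>)) - D * a"
    "cutoff \<delta> g p = (g p - g (1, \<delta>)) + D * (1 - a)"
    using assms(6) unfolding cutoff_def D_def ab by (auto simp: algebra_simps)
  moreover have "\<bar>D * a\<bar> \<le> \<bar>D\<bar> * (a + b - \<delta>)" "\<bar>D * (1 - a)\<bar> \<le> \<bar>D\<bar> * (1 - a + b - \<delta>)"
    using a assms(6) unfolding ab by (auto simp: abs_mult intro: mult_left_mono)
  ultimately have "\<bar>cutoff \<delta> g p\<bar> \<le> (1 + \<bar>D\<bar>) * min (a + b - \<delta>) (1 - a + b - \<delta>)"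
    by (simp add: min_def algebra_simps) arith
  moreover
  \<comment> \<open>a path from \<open>p\<close> down to \<open>q\<close> crosses height \<open>\<delta>\<close> on the left or on the right segment\<close>
  have "min (a + b - \<delta>) (1 - a + b - \<delta>) \<le> dM p q"
    using Msp_bounds[OF q] assms(6,7) unfolding ab dM_def by auto
  ultimately show ?thesis unfolding D_def
    by (meson abs_ge_zero add_nonneg_nonneg zero_le_one mult_left_mono order_trans)
qed

lemma cutoff_high_high:
  assumes g: "g \<in> Lip0Ball" and p: "p \<in> Msp" and q: "q \<in> Msp"
    and "\<delta> < snd p" "\<delta> < snd q"
  shows "\<bar>cutoff \<delta> g p - cutoff \<delta> g q\<bar> \<le> (1 + \<bar>g (1, \<delta>) - g (0, \<delta>)\<bar>) * dM p q"
proof -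
  define D where "D = g (1, \<delta>) - g (0, \<delta>)"
  have "cutoff \<delta> g p - cutoff \<delta> g q = (g p - g q) - D * (fst p - fst q)"
    using assms(4,5) unfolding cutoff_def D_def by (simp add: algebra_simps)
  moreover have "\<bar>g p - g q\<bar> \<le> dM p q" using g p q unfolding Lip0Ball_def by auto
  moreover have "\<bar>D * (fst p - fst q)\<bar> \<le> \<bar>D\<bar> * dM p q"
    using abs_fst_diff_le_dM[OF p q] by (simp add: abs_mult mult_left_mono)
  ultimately show ?thesis unfolding D_def by (simp add: algebra_simps)
qed

lemma lipschitz_cutoff:
  assumes g: "g \<in> Lip0Ball" and "0 \<le> \<delta>" "\<delta> \<le> 1/2" and p: "p \<in> Msp" and q: "q \<in> Msp"
  shows "\<bar>cutoff \<delta> g p - cutoff \<delta> g q\<bar> \<le> (1 + \<bar>g (1, \<delta>) - g (0, \<delta>)\<bar>) * dM p q"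
proof (cases "\<delta> < snd p"; cases "\<delta> < snd q")
  assume "\<delta> < snd p" "\<delta> < snd q"
  then show ?thesis using cutoff_high_high[OF g p q] by blast
next
  assume "\<delta> < snd p" "\<not> \<delta> < snd q"
  then show ?thesis using cutoff_high_low[OF assms] by (simp add: cutoff_def)
next
  assume "\<not> \<delta> < snd p" "\<delta> < snd q"
  then show ?thesis using cutoff_high_low[OF assms(1-3) q p] dM_commute[of p q]
    by (simp add: cutoff_def)
next
  assume "\<not> \<delta> < snd p" "\<not> \<delta> < snd q"
  then show ?thesis using dM_nonneg[OF p q] by (simp add: cutoff_def)
qed

lemma cutoff_slope_bound:
  assumes g: "g \<in> Lip0Ball" and "0 \<le> \<delta>" "\<delta> \<le> 1/2"
  shows "\<bar>g (1, \<delta>) - g (0, \<delta>)\<bar> \<le> 2 * \<delta> + \<bar>mol (0, 0) (1, 0) g\<bar>"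
proof -
  have "(0, \<delta>) \<in> Msp" "(1, \<delta>) \<in> Msp" "(0, 0) \<in> Msp" "(1, 0) \<in> Msp"
    using assms(2,3) by (auto intro: vertical_segment_in_Msp)
  then have "\<bar>g (0, \<delta>) - g (0, 0)\<bar> \<le> dM (0, \<delta>) (0, 0)" "\<bar>g (1, \<delta>) - g (1, 0)\<bar> \<le> dM (1, \<delta>) (1, 0)"
    using g unfolding Lip0Ball_def by blast+
  moreover have "dM (0, \<delta>) (0, 0) = \<delta>" "dM (1, \<delta>) (1, 0) = \<delta>" "dM (0, 0) (1, 0) = 1"
    using assms(2) unfolding dM_def by auto
  moreover have "g (0, 0) = 0" using g unfolding Lip0Ball_def by simp
  ultimately show ?thesis unfolding mol_def by simp
qed

lemma mol_cutoff_ge: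
  assumes "u \<in> Msp" "v \<in> Msp" "u \<noteq> v" "\<delta> < snd u" "\<delta> < snd v"
  shows "mol u v g - \<bar>g (1, \<delta>) - g (0, \<delta>)\<bar> \<le> mol u v (cutoff \<delta> g)"
proof -
  define D where "D = g (1, \<delta>) - g (0, \<delta>)"
  have "mol u v (cutoff \<delta> g) = mol u v g - D * mol u v fst"
    using assms(4,5) dM_pos[OF assms(1-3)] unfolding mol_def cutoff_def D_def
    by (simp add: field_simps)
  moreover have "\<bar>D * mol u v fst\<bar> \<le> \<bar>D\<bar>"
    using abs_mol_fst_le_1[OF assms(1-3)] by (simp add: abs_mult mult_left_le)
  ultimately show ?thesis unfolding D_def by linarith
qed

lemma scaled_cutoff_in_Lip0Ball:
  assumes g: "g \<in> Lip0Ball" and "0 < \<delta>" "\<delta> \<le> 1/2"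
    and K: "1 + \<bar>g (1, \<delta>) - g (0, \<delta>)\<bar> \<le> K"
  shows "(\<lambda>p. cutoff \<delta> g p / K) \<in> Lip0Ball"
  unfolding Lip0Ball_def
proof (intro CollectI conjI ballI)
  show "cutoff \<delta> g (0, 0) / K = 0" using assms(2) by (simp add: cutoff_def)
next
  fix p q assume p: "p \<in> Msp" and q: "q \<in> Msp"
  have "\<bar>cutoff \<delta> g p - cutoff \<delta> g q\<bar> \<le> K * dM p q"
    using lipschitz_cutoff[OF g _ assms(3) p q] assms(2) mult_right_mono[OF K dM_nonneg[OF p q]]
    by linarith
  moreover have "0 < K" using K by linarith
  ultimately show "\<bar>cutoff \<delta> g p / K - cutoff \<delta> g q / K\<bar> \<le> dM p q"
    by (simp add: abs_divide divide_simps flip: diff_divide_distrib) (simp add: mult.commute)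
qed

theorem mainTheorem2:
  fixes \<epsilon> \<delta> :: real and \<nu> :: "(real \<times> real \<Rightarrow> real) \<Rightarrow> real"
  assumes "\<epsilon> > 0" and "\<delta> > 0"
    and "\<nu> \<in> convMol \<delta> 1"
    and "\<exists>g\<in>Lip0Ball. \<nu> g = normF \<nu> \<and> \<bar>mol (0, 0) (1, 0) g\<bar> < \<epsilon>"
  shows "\<exists>f\<in>Lip0Ball. \<nu> f > (normF \<nu> - \<epsilon> - 2 * \<delta>) / (1 + \<epsilon> + 2 * \<delta>)
           \<and> (\<forall>p\<in>Msp. pi2 p \<le> \<delta> \<longrightarrow> f p = 0)"
proof -
  obtain g where g: "g \<in> Lip0Ball" and norming: "\<nu> g = normF \<nu>"
    and small: "\<bar>mol (0, 0) (1, 0) g\<bar> < \<epsilon>" using assms(4) by blast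
  define s where "s = 2 * \<delta> + \<bar>mol (0, 0) (1, 0) g\<bar>"
  define f where "f = (\<lambda>p. cutoff \<delta> g p / (1 + s))"
  have \<delta>: "\<delta> \<le> 1/2" using convMol_imp_less_half[OF assms(3)] by simp
  have slope: "\<bar>g (1, \<delta>) - g (0, \<delta>)\<bar> \<le> s"
    unfolding s_def using cutoff_slope_bound[OF g _ \<delta>] assms(2) by simp
  have "f \<in> Lip0Ball"
    unfolding f_def using scaled_cutoff_in_Lip0Ball[OF g assms(2) \<delta>] slope by simp
  moreover have "\<forall>p\<in>Msp. pi2 p \<le> \<delta> \<longrightarrow> f p = 0" unfolding f_def cutoff_def pi2_def by simp
  moreover have "1 / (1 + s) * \<nu> g + - s / (1 + s) \<le> \<nu> f"
  proof (rule convMol_affine_le[OF assms(3)])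
    fix u v assume "u \<in> Msp" "v \<in> Msp" "u \<noteq> v" "\<delta> < pi2 u" "\<delta> < pi2 v"
    then have "mol u v g - s \<le> mol u v (cutoff \<delta> g)"
      using mol_cutoff_ge[of u v \<delta> g] slope unfolding pi2_def by force
    moreover have "0 < 1 + s" unfolding s_def using assms(2) by simp
    ultimately show "1 / (1 + s) * mol u v g + - s / (1 + s) \<le> mol u v f"
      unfolding f_def mol_scale by (simp add: divide_simps)
  qed
  then have "(normF \<nu> - s) / (1 + s) \<le> \<nu> f" by (simp add: norming diff_divide_distrib)
  moreover have "(normF \<nu> - \<epsilon> - 2 * \<delta>) / (1 + \<epsilon> + 2 * \<delta>) < (normF \<nu> - s) / (1 + s)"
    using diff_div_one_plus_strict_antimono[of "normF \<nu>" s "\<epsilon> + 2 * \<delta>"]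
      normF_nonneg[OF assms(3)] assms(2) small
    unfolding s_def by (simp add: diff_diff_eq add.assoc)
  ultimately show ?thesis by (meson less_le_trans)
qed

end
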